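(* Let $f\colon G\to G$ be a graph map with primitive transition matrix, and let $\widehat f\colon\widehat G\to\widehat G$ be its orientation lift to the oriented edge double. Then $\lambda_{\widehat f}=\lambda_f$, and $\widehat f$ has primitive transition matrix if and only if $f$ is not orientable.
   Context: A graph map sends vertices to vertices and edges to nondegenerate edge paths; its transition matrix has $(i,j)$ entry the number of times $f(e_j)$ crosses $e_i$ in either direction, and $\lambda_f$ denotes the spectral radius of this matrix. A nonnegative square matrix is primitive if some power has all entries positive. Fix an orientation of each edge of $G$. The oriented edge double is the graph $\widehat G$ with a map $p\colon\widehat G\to G$ bijective on vertices, with exactly two edges $e_+,e_-$ over each edge $e$ of $G$, where $p(e_+)=e$ and $p(e_-)=\overline e$ ($e$ reversed); orient $\widehat G$ by declaring each $e_\pm$ positive. Every edge path $\gamma$ in $G$ has a unique positive lift, i.e. an edge path in $\widehat G$ crossing edges only positively and projecting to $\gamma$. The orientation lift $\widehat f$ is the graph map sending $e_+$ to the positive lift of $f(e)$ and $e_-$ to the positive lift of $f(\overline e)$. A graph map is positively (resp. negatively) orientable if for some orientation of the graph every positive edge maps to an edge path crossing every edge positively (resp. negatively); it is orientable if it is positively or negatively orientable. *)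

theory Defs
  imports "HOL-Analysis.Analysis"
begin

text \<open>A finite graph is given by a finite vertex type 'v, a finite edge type 'e
  (loops and multiple edges allowed) and, for a fixed orientation of every edge,
  its initial vertex src e and terminal vertex tgt e.
  A directed edge is a pair (e, b): (e, True) is e crossed positively,
  (e, False) is e crossed negatively (i.e. e reversed).\<close>

type_synonym 'e dedge = "'e \<times> bool"

definition dsrc :: "('e \<Rightarrow> 'v) \<Rightarrow> ('e \<Rightarrow> 'v) \<Rightarrow> 'e dedge \<Rightarrow> 'v" where
  "dsrc src tgt d = (if snd d then src (fst d) else tgt (fst d))"

definition dtgt :: "('e \<Rightarrow> 'v) \<Rightarrow> ('e \<Rightarrow> 'v) \<Rightarrow> 'e dedge \<Rightarrow> 'v" where
  "dtgt src tgt d = (if snd d then tgt (fst d) else src (fst d))"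

definition is_path :: "('e \<Rightarrow> 'v) \<Rightarrow> ('e \<Rightarrow> 'v) \<Rightarrow> 'e dedge list \<Rightarrow> 'v \<Rightarrow> 'v \<Rightarrow> bool" where
  "is_path src tgt p u w \<longleftrightarrow> p \<noteq> [] \<and>
     dsrc src tgt (hd p) = u \<and> dtgt src tgt (last p) = w \<and>
     (\<forall>i. Suc i < length p \<longrightarrow> dtgt src tgt (p ! i) = dsrc src tgt (p ! Suc i))"

definition rev_path :: "'e dedge list \<Rightarrow> 'e dedge list" where
  "rev_path p = rev (map (\<lambda>(e, b). (e, \<not> b)) p)"

definition graph_map :: "('e \<Rightarrow> 'v) \<Rightarrow> ('e \<Rightarrow> 'v) \<Rightarrow> ('v \<Rightarrow> 'v) \<Rightarrow> ('e \<Rightarrow> 'e dedge list) \<Rightarrow> bool" where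
  "graph_map src tgt fv fe \<longleftrightarrow> (\<forall>e. is_path src tgt (fe e) (fv (src e)) (fv (tgt e)))"

definition map_dedge :: "('e \<Rightarrow> 'e dedge list) \<Rightarrow> 'e dedge \<Rightarrow> 'e dedge list" where
  "map_dedge fe d = (if snd d then fe (fst d) else rev_path (fe (fst d)))"

definition transition_matrix :: "('e::finite \<Rightarrow> 'e dedge list) \<Rightarrow> real^'e^'e" where
  "transition_matrix fe = (\<chi> i j. real (length (filter (\<lambda>d. fst d = i) (fe j))))"

definition matpow :: "'a::comm_ring_1^'n::finite^'n \<Rightarrow> nat \<Rightarrow> 'a^'n^'n" where
  "matpow A k = (((**) A) ^^ k) (mat 1)"

definition primitive :: "real^'n::finite^'n \<Rightarrow> bool" where
  "primitive A \<longleftrightarrow> (\<forall>i j. A $ i $ j \<ge> 0) \<and>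
     (\<exists>k\<ge>1. \<forall>i j. matpow A k $ i $ j > 0)"

definition cmatrix :: "real^'n::finite^'n \<Rightarrow> complex^'n^'n" where
  "cmatrix A = (\<chi> i j. complex_of_real (A $ i $ j))"

definition eigenvalues :: "real^'n::finite^'n \<Rightarrow> complex set" where
  "eigenvalues A = {z. \<exists>v. v \<noteq> 0 \<and> cmatrix A *v v = z *s v}"

definition spectral_radius :: "real^'n::finite^'n \<Rightarrow> real" where
  "spectral_radius A = Max (norm ` eigenvalues A)"

text \<open>The oriented edge double of (src, tgt): same vertices (p is the identity on
  vertices), edges 'e \<times> bool, where (e, True) = e_+ lies over e and
  (e, False) = e_- lies over e reversed; every edge of the double is oriented
  positively, so e_+ runs from src e to tgt e and e_- from tgt e to src e.\<close>
definition dbl_src :: "('e \<Rightarrow> 'v) \<Rightarrow> ('e \<Rightarrow> 'v) \<Rightarrow> 'e dedge \<Rightarrow> 'v" where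
  "dbl_src src tgt = dsrc src tgt"

definition dbl_tgt :: "('e \<Rightarrow> 'v) \<Rightarrow> ('e \<Rightarrow> 'v) \<Rightarrow> 'e dedge \<Rightarrow> 'v" where
  "dbl_tgt src tgt = dtgt src tgt"

definition pos_lift :: "'e dedge list \<Rightarrow> ('e dedge) dedge list" where
  "pos_lift p = map (\<lambda>d. (d, True)) p"

text \<open>Orientation lift: e_+ \<mapsto> positive lift of f(e), e_- \<mapsto> positive lift of f(e reversed).
  The vertex map is the same as that of f.\<close>
definition orient_lift :: "('e \<Rightarrow> 'e dedge list) \<Rightarrow> 'e dedge \<Rightarrow> ('e dedge) dedge list" where
  "orient_lift fe d = pos_lift (map_dedge fe d)"

text \<open>An orientation of G is given by ori :: 'e \<Rightarrow> bool: the positive direction of e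
  under ori is the directed edge (e, ori e).\<close>
definition positively_orientable :: "('e \<Rightarrow> 'e dedge list) \<Rightarrow> bool" where
  "positively_orientable fe \<longleftrightarrow> (\<exists>ori. \<forall>e. \<forall>d \<in> set (map_dedge fe (e, ori e)). snd d = ori (fst d))"

definition negatively_orientable :: "('e \<Rightarrow> 'e dedge list) \<Rightarrow> bool" where
  "negatively_orientable fe \<longleftrightarrow> (\<exists>ori. \<forall>e. \<forall>d \<in> set (map_dedge fe (e, ori e)). snd d \<noteq> ori (fst d))"

definition orientable :: "('e \<Rightarrow> 'e dedge list) \<Rightarrow> bool" where
  "orientable fe \<longleftrightarrow> positively_orientable fe \<or> negatively_orientable fe"

end

theory Submission
  imports Defs "HOL-Computational_Algebra.Polynomial"
begin

(* The positivity pattern of the transition matrix of the orientation lift is the double cover of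
   the signed graph of f (edge e_i -> e_l with sign s whenever f(e_l) crosses e_i in direction s).
   Summing the lift's entries over the two sheets gives back the entries of the original matrix,
   so a positive left Perron eigenvector w of f lifts to the positive left eigenvector w o p of the
   lift with the same eigenvalue; both spectral radii are then that eigenvalue.  A walk in the
   double cover is a walk in the base together with a parity, so the cover is primitive unless
   some switching ori makes every sign constant, which is exactly orientability: if all signs are
   positive (negative) after switching, walks keep (alternate) the sheet, and otherwise a walk
   reaches both lifts of an edge in the same number of steps, after which primitivity of the
   base spreads to the cover. *)

section \<open>Eigenvalues of real matrices\<close>

lemma det_minus_mat_poly:
  fixes C :: "'a::comm_ring_1^'n::finite^'n"
  shows "\<exists>p. \<forall>z. det (C - mat z) = poly p z"
proof -
  define p where "p = (\<Sum>\<pi> | \<pi> permutes (UNIV::'n set). of_int (sign \<pi>) *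
     (\<Prod>i\<in>UNIV. [: C$i$(\<pi> i), - (if i = \<pi> i then 1 else 0) :]))"
  have "det (C - mat z) = poly p z" for z
    unfolding det_def p_def poly_sum poly_mult poly_prod
    by (intro sum.cong refl arg_cong2[where f="(*)"] prod.cong) (auto simp: of_int_poly mat_def)
  then show ?thesis by blast
qed

lemma mat_mult_vec: "mat z *v v = z *s (v :: 'a::comm_semiring_1^'n::finite)"
  by (simp add: vec_eq_iff matrix_vector_mult_def mat_def if_distrib if_distribR cong: if_cong)

lemma norm_scalar_mult_vec: "norm (z *s (v::'a::real_normed_field^'n::finite)) = norm z * norm v"
  unfolding norm_vec_def by (simp add: norm_mult L2_set_right_distrib)

lemma mem_eigenvalues_iff_det: "z \<in> eigenvalues A \<longleftrightarrow> det (cmatrix A - mat z) = 0"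
proof -
  have "det (cmatrix A - mat z) = 0 \<longleftrightarrow> (\<exists>v. v \<noteq> 0 \<and> (cmatrix A - mat z) *v v = 0)"
    using invertible_det_nz invertible_left_inverse matrix_left_invertible_ker by metis
  then show ?thesis
    by (simp add: eigenvalues_def matrix_vector_mult_diff_rdistrib mat_mult_vec)
qed

lemma eigenvalues_transpose: "eigenvalues (transpose A) = eigenvalues A"
proof -
  have "cmatrix (transpose A) - mat z = transpose (cmatrix A - mat z)" for z
    by (simp add: cmatrix_def transpose_def mat_def vec_eq_iff)
  then show ?thesis
    by (simp add: set_eq_iff mem_eigenvalues_iff_det)
qed

lemma eigenvaluesE:
  assumes "z \<in> eigenvalues A"
  obtains v where "v \<noteq> 0" "cmatrix A *v v = z *s v"
proof -
  have "\<exists>v. v \<noteq> 0 \<and> cmatrix A *v v = z *s v"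
    using assms by (simp add: eigenvalues_def)
  then show ?thesis
    using that by (elim exE conjE)
qed

lemma eigenvalues_bounded: "\<exists>B. \<forall>z\<in>eigenvalues A. norm z \<le> B"
proof -
  have "\<exists>B. \<forall>v. norm (cmatrix A *v v) \<le> norm v * B"
    using bounded_linear.bounded[OF matrix_vector_mul_bounded_linear[of "cmatrix A"]] by blast
  then obtain B where B: "\<And>v. norm (cmatrix A *v v) \<le> norm v * B"
    by blast
  have "norm z \<le> B" if z: "z \<in> eigenvalues A" for z
  proof -
    obtain v where v: "v \<noteq> 0" "cmatrix A *v v = z *s v"
      using z by (rule eigenvaluesE)
    have "norm z * norm v = norm (cmatrix A *v v)"
      by (simp add: v(2) norm_scalar_mult_vec)
    also have "\<dots> \<le> B * norm v"
      using B[of v] by (simp only: mult.commute)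
    finally show ?thesis
      using v(1) by simp
  qed
  then show ?thesis by blast
qed

lemma finite_eigenvalues: "finite (eigenvalues A)"
proof -
  obtain p where p: "\<And>z. det (cmatrix A - mat z) = poly p z"
    using det_minus_mat_poly by blast
  obtain B where B: "\<And>z. z \<in> eigenvalues A \<Longrightarrow> norm z \<le> B"
    using eigenvalues_bounded by blast
  have "p \<noteq> 0" \<comment> \<open>otherwise every complex number would be an eigenvalue\<close>
  proof
    assume "p = 0"
    then have "of_real (\<bar>B\<bar> + 1) \<in> eigenvalues A"
      by (simp add: mem_eigenvalues_iff_det p)
    then have "\<bar>B\<bar> + 1 \<le> B" using B by fastforce
    then show False by simp
  qed
  moreover have "eigenvalues A = {z. poly p z = 0}"
    by (auto simp: mem_eigenvalues_iff_det p)
  ultimately show ?thesis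
    using poly_roots_finite by simp
qed

lemma of_real_mem_eigenvalues:
  assumes "x \<noteq> 0" "A *v x = r *s x"
  shows "of_real r \<in> eigenvalues A"
proof -
  define v where "v = (\<chi> i. complex_of_real (x$i))"
  have "v \<noteq> 0" using assms(1) by (auto simp: v_def vec_eq_iff)
  moreover have "cmatrix A *v v = of_real r *s v"
    using assms(2) unfolding vec_eq_iff
    by (simp add: v_def cmatrix_def matrix_vector_mult_def flip: of_real_mult of_real_sum)
  ultimately show ?thesis by (auto simp: eigenvalues_def)
qed

lemma eigenvalue_norm_le_pos_left_eigenvector:
  fixes N :: "real^'n::finite^'n"
  assumes nonneg: "\<And>i j. 0 \<le> N$i$j" and w_pos: "\<And>i. 0 < w$i" and w: "w v* N = r *s w"
    and z: "z \<in> eigenvalues N"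
  shows "norm z \<le> r"
proof -
  obtain v where v: "v \<noteq> 0" "cmatrix N *v v = z *s v"
    using z by (rule eigenvaluesE)
  have row: "norm z * norm (v$i) \<le> (\<Sum>j\<in>UNIV. N$i$j * norm (v$j))" for i
  proof -
    have "norm z * norm (v$i) = norm (\<Sum>j\<in>UNIV. complex_of_real (N$i$j) * v$j)"
      using v(2) by (simp add: vec_eq_iff matrix_vector_mult_def cmatrix_def flip: norm_mult)
    also have "\<dots> \<le> (\<Sum>j\<in>UNIV. norm (complex_of_real (N$i$j) * v$j))"
      by (rule norm_sum)
    also have "\<dots> = (\<Sum>j\<in>UNIV. N$i$j * norm (v$j))"
      using nonneg by (simp add: norm_mult)
    finally show ?thesis .
  qed
  define S where "S = (\<Sum>i\<in>UNIV. w$i * norm (v$i))"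
  have "norm z * S = (\<Sum>i\<in>UNIV. w$i * (norm z * norm (v$i)))"
    unfolding S_def by (simp add: sum_distrib_left algebra_simps)
  also have "\<dots> \<le> (\<Sum>i\<in>UNIV. w$i * (\<Sum>j\<in>UNIV. N$i$j * norm (v$j)))"
    by (intro sum_mono mult_left_mono row less_imp_le w_pos)
  also have "\<dots> = (\<Sum>j\<in>UNIV. (w v* N)$j * norm (v$j))"
    by (simp add: vector_matrix_mult_def sum_distrib_left sum_distrib_right algebra_simps)
       (rule sum.swap)
  also have "\<dots> = r * S"
    unfolding S_def w by (simp add: sum_distrib_left algebra_simps)
  finally have "norm z * S \<le> r * S" .
  moreover have "0 < S"
  proof -
    obtain i where "v$i \<noteq> 0" using v(1) by (auto simp: vec_eq_iff)
    then show ?thesis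
      unfolding S_def using w_pos by (intro sum_pos2[where i=i]) (auto simp: less_imp_le)
  qed
  ultimately show ?thesis by simp
qed

lemma spectral_radius_eq_pos_left_eigenvector:
  fixes N :: "real^'n::finite^'n"
  assumes nonneg: "\<And>i j. 0 \<le> N$i$j" and w_pos: "\<And>i. 0 < w$i" and w: "w v* N = r *s w"
  shows "spectral_radius N = r"
proof -
  have "w \<noteq> 0" using w_pos by (metis less_irrefl zero_index)
  then have r: "of_real r \<in> eigenvalues N"
    using of_real_mem_eigenvalues[of w "transpose N" r] w by (simp add: eigenvalues_transpose)
  have le: "norm z \<le> r" if "z \<in> eigenvalues N" for z
    using eigenvalue_norm_le_pos_left_eigenvector[OF nonneg w_pos w that] .
  then have "r = norm (complex_of_real r)" using r by fastforce
  then have "r \<in> norm ` eigenvalues N" using r by blast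
  then show ?thesis
    unfolding spectral_radius_def using le finite_eigenvalues
    by (intro Max_eqI) auto
qed

section \<open>Primitive matrices\<close>

(* Brouwer's fixed point theorem for x \<mapsto> N x / (sum of entries of N x) on the standard simplex. *)
lemma nonneg_eigenvector_exists:
  fixes N :: "real^'n::finite^'n"
  assumes nonneg: "\<And>i j. 0 \<le> N$i$j" and col: "\<And>j. \<exists>i. 0 < N$i$j"
  obtains x r where "\<And>i. 0 \<le> x$i" "x \<noteq> 0" "N *v x = r *s x"
proof -
  define S where "S = {x::real^'n. (\<forall>i. 0 \<le> x$i) \<and> sum (($) x) UNIV = 1}"
  define \<sigma> where "\<sigma> x = sum (($) (N *v x)) UNIV" for x
  have Nx_nonneg: "0 \<le> (N *v x)$i" if "x \<in> S" for x i
    using that nonneg unfolding S_def matrix_vector_mult_def by (auto intro!: sum_nonneg)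
  have \<sigma>_pos: "0 < \<sigma> x" if "x \<in> S" for x
  proof -
    from that have x_nonneg: "\<And>i. 0 \<le> x$i" and "sum (($) x) UNIV = 1" by (auto simp: S_def)
    then obtain j where "0 < x$j"
      by (metis less_eq_real_def sum_nonneg_eq_0_iff finite zero_neq_one UNIV_I)
    moreover obtain i where "0 < N$i$j" using col by blast
    ultimately have "0 < N$i$j * x$j" by simp
    also have "\<dots> \<le> (N *v x)$i"
      unfolding matrix_vector_mult_def using nonneg x_nonneg by (auto intro!: member_le_sum)
    also have "\<dots> \<le> \<sigma> x"
      unfolding \<sigma>_def using Nx_nonneg[OF that] by (auto intro!: member_le_sum)
    finally show ?thesis .
  qed
  define f where "f x = (1 / \<sigma> x) *\<^sub>R (N *v x)" for x
  have "compact S"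
  proof -
    have "closed S" unfolding S_def
      by (intro closed_Collect_conj closed_Collect_all closed_Collect_le closed_Collect_eq continuous_intros)
    moreover have "S \<subseteq> cbox 0 1"
    proof
      fix x assume "x \<in> S"
      then show "x \<in> cbox 0 1"
        using member_le_sum[of _ UNIV "($) x"] by (auto simp: S_def mem_box_cart)
    qed
    ultimately show ?thesis
      by (meson bounded_cbox bounded_subset compact_eq_bounded_closed)
  qed
  moreover have "convex S"
    unfolding convex_def S_def
    by (auto simp: sum.distrib sum_distrib_left[symmetric] intro!: add_nonneg_nonneg mult_nonneg_nonneg)
  moreover have "S \<noteq> {}"
  proof -
    have "(\<chi> i. 1 / real CARD('n)) \<in> S" unfolding S_def by simp
    then show ?thesis by blast
  qed
  moreover have "continuous_on S f"
  proof -
    have "continuous_on S ((*v) N)"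
      by (simp add: linear_continuous_on)
    then show ?thesis
      unfolding f_def \<sigma>_def using \<sigma>_pos[unfolded \<sigma>_def]
      by (intro continuous_intros) fastforce+
  qed
  moreover have "f \<in> S \<rightarrow> S"
  proof
    fix x assume "x \<in> S"
    then show "f x \<in> S"
      using \<sigma>_pos[of x] Nx_nonneg[of x]
      by (auto simp: S_def f_def \<sigma>_def sum_divide_distrib[symmetric])
  qed
  ultimately obtain x where x: "x \<in> S" "f x = x"
    using brouwer by blast
  have "N *v x = \<sigma> x *\<^sub>R f x"
    using \<sigma>_pos[OF x(1)] by (simp add: f_def)
  then have "N *v x = \<sigma> x *s x"
    by (simp add: x(2) scalar_mult_eq_scaleR)
  moreover have "x \<noteq> 0" using x(1) by (auto simp: S_def)
  ultimately show ?thesis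
    using that x(1) by (auto simp: S_def)
qed

definition pos_entries :: "real^'n^'n \<Rightarrow> 'n \<Rightarrow> 'n \<Rightarrow> bool" where
  "pos_entries N i j \<longleftrightarrow> 0 < N$i$j"

definition primitive_rel :: "('a \<Rightarrow> 'a \<Rightarrow> bool) \<Rightarrow> bool" where
  "primitive_rel R \<longleftrightarrow> (\<exists>k\<ge>1. \<forall>x y. (R ^^ k) x y)"

lemma primitive_rel_left_total:
  assumes "primitive_rel R"
  shows "left_total R"
  unfolding left_total_def
proof
  fix x
  obtain k where "1 \<le> k" "\<And>x y. (R ^^ k) x y"
    using assms unfolding primitive_rel_def by blast
  then obtain k' where "(R ^^ Suc k') x x"
    by (cases k) (auto simp del: relpowp.simps)
  then show "\<exists>y. R x y"
    by (blast elim: relpowp_Suc_E2)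
qed

lemma sum_pos_iff:
  fixes f :: "'a \<Rightarrow> 'b::{ordered_comm_monoid_add,linorder}"
  assumes "finite A" "\<And>x. x \<in> A \<Longrightarrow> 0 \<le> f x"
  shows "0 < sum f A \<longleftrightarrow> (\<exists>x\<in>A. 0 < f x)"
proof
  assume "0 < sum f A"
  then show "\<exists>x\<in>A. 0 < f x"
    using sum_nonpos[of A f] by (meson not_le)
next
  assume "\<exists>x\<in>A. 0 < f x"
  then show "0 < sum f A"
    using sum_pos2[OF assms(1)] assms(2) by blast
qed

lemma sum_UNIV_prod: "(\<Sum>x\<in>UNIV. f x) = (\<Sum>a\<in>UNIV. \<Sum>b\<in>UNIV. f (a, b))"
  by (simp only: UNIV_Times_UNIV[symmetric] sum.cartesian_product case_prod_eta)

lemma matpow_Suc: "matpow A (Suc k) = A ** matpow A k"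
  by (simp add: matpow_def)

lemma matpow_nonneg:
  fixes N :: "real^'n::finite^'n"
  assumes "\<And>i j. 0 \<le> N$i$j"
  shows "0 \<le> matpow N k $ i $ j"
  using assms
  by (induction k arbitrary: i) (auto simp: matpow_def mat_def matrix_matrix_mult_def intro!: sum_nonneg)

lemma matpow_pos_iff_relpowp:
  fixes N :: "real^'n::finite^'n"
  assumes nonneg: "\<And>i j. 0 \<le> N$i$j"
  shows "0 < matpow N k $ i $ j \<longleftrightarrow> (pos_entries N ^^ k) i j"
proof (induction k arbitrary: i)
  case 0
  show ?case by (simp add: matpow_def mat_def)
next
  case (Suc k)
  have "0 < matpow N (Suc k) $ i $ j \<longleftrightarrow> (\<exists>l. 0 < N$i$l * matpow N k $ l $ j)"
    unfolding matpow_Suc matrix_matrix_mult_def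
    using nonneg matpow_nonneg[OF nonneg] by (simp add: sum_pos_iff)
  also have "\<dots> \<longleftrightarrow> (\<exists>l. pos_entries N i l \<and> 0 < matpow N k $ l $ j)"
    using nonneg matpow_nonneg[OF nonneg] by (simp add: pos_entries_def zero_less_mult_iff) (meson leD)
  also have "\<dots> \<longleftrightarrow> (pos_entries N ^^ Suc k) i j"
    unfolding relpowp_Suc_left Suc.IH by blast
  finally show ?case .
qed

lemma primitive_iff_primitive_rel:
  "primitive N \<longleftrightarrow> (\<forall>i j. 0 \<le> N$i$j) \<and> primitive_rel (pos_entries N)"
  unfolding primitive_def primitive_rel_def by (auto simp: matpow_pos_iff_relpowp)

lemma left_eigenvector_matpow:
  fixes N :: "'a::field^'n::finite^'n"
  assumes "w v* N = r *s w"
  shows "w v* matpow N k = r ^ k *s w"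
proof (induction k)
  case 0
  show ?case by (simp add: matpow_def)
next
  case (Suc k)
  have "w v* matpow N (Suc k) = (w v* N) v* matpow N k"
    by (simp add: matpow_Suc vector_matrix_mul_assoc)
  also have "\<dots> = r *s (w v* matpow N k)"
    by (simp add: assms scalar_vector_matrix_assoc)
  also have "\<dots> = r ^ Suc k *s w"
    by (simp add: Suc.IH)
  finally show ?case .
qed

lemma primitive_pos_left_eigenvector:
  fixes N :: "real^'n::finite^'n"
  assumes "primitive N"
  obtains w r where "\<And>i. 0 < w$i" "w v* N = r *s w"
proof -
  have nonneg: "\<And>i j. 0 \<le> N$i$j" and prim: "primitive_rel (pos_entries N)"
    using assms by (auto simp: primitive_iff_primitive_rel)
  have "\<exists>i. 0 < transpose N $ i $ j" for j
    using primitive_rel_left_total[OF prim] by (auto simp: left_total_def pos_entries_def transpose_def)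
  then obtain w r where w_nonneg: "\<And>i. 0 \<le> w$i" and "w \<noteq> 0" and "transpose N *v w = r *s w"
    using nonneg_eigenvector_exists[of "transpose N"] nonneg by (auto simp: transpose_def)
  then have w: "w v* N = r *s w" by simp
  obtain i0 where "0 < w$i0"
    using \<open>w \<noteq> 0\<close> w_nonneg by (metis less_eq_real_def vec_eq_iff zero_index)
  obtain k where "\<And>i j. 0 < matpow N k $ i $ j"
    using assms unfolding primitive_def by blast
  have "0 < w$j" for j
  proof -
    have "0 < (w v* matpow N k) $ j"
      unfolding vector_matrix_mult_def using \<open>0 < w$i0\<close> \<open>0 < matpow N k $ i0 $ j\<close>
      by (auto intro!: sum_pos2[where i=i0] mult_nonneg_nonneg w_nonneg matpow_nonneg nonneg)
    then have "0 < r ^ k * w$j" by (simp add: left_eigenvector_matpow[OF w])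
    then show ?thesis using w_nonneg[of j] by (metis less_eq_real_def mult_zero_right)
  qed
  then show ?thesis using that w by blast
qed

section \<open>Double covers of signed relations\<close>

definition double_cover :: "('a \<Rightarrow> 'a \<Rightarrow> bool \<Rightarrow> bool) \<Rightarrow> 'a \<times> bool \<Rightarrow> 'a \<times> bool \<Rightarrow> bool" where
  "double_cover Q x y \<longleftrightarrow> Q (fst x) (fst y) (snd x = snd y)"

definition unsigned :: "('a \<Rightarrow> 'a \<Rightarrow> bool \<Rightarrow> bool) \<Rightarrow> 'a \<Rightarrow> 'a \<Rightarrow> bool" where
  "unsigned Q a a' \<longleftrightarrow> (\<exists>s. Q a a' s)"

(* As for signed graphs: after switching by ori, all signs are positive (t) or all negative (\<not> t). *)
definition balanced_or_antibalanced :: "('a \<Rightarrow> 'a \<Rightarrow> bool \<Rightarrow> bool) \<Rightarrow> bool" where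
  "balanced_or_antibalanced Q \<longleftrightarrow>
     (\<exists>(ori :: 'a \<Rightarrow> bool) t. \<forall>a a' s. Q a a' s \<longrightarrow> s = ((ori a = ori a') = t))"

lemma double_cover_relpowp_flip:
  "(double_cover Q ^^ k) (a, b) (a', b') \<Longrightarrow> (double_cover Q ^^ k) (a, \<not> b) (a', \<not> b')"
proof (induction k arbitrary: a' b')
  case 0
  then show ?case by simp
next
  case (Suc k)
  from Suc.prems obtain y where y: "(double_cover Q ^^ k) (a, b) y" "double_cover Q y (a', b')"
    by (rule relpowp_Suc_E)
  obtain m c where m: "y = (m, c)" by fastforce
  have "(double_cover Q ^^ k) (a, \<not> b) (m, \<not> c)"
    using Suc.IH y(1) unfolding m .
  moreover have "double_cover Q (m, \<not> c) (a', \<not> b')"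
    using y(2) unfolding m by (simp add: double_cover_def)
  ultimately show ?case by (rule relpowp_Suc_I)
qed

lemma double_cover_relpowp_lift:
  "(unsigned Q ^^ k) a a' \<Longrightarrow> \<exists>g. \<forall>b. (double_cover Q ^^ k) (a, b) (a', b = g)"
proof (induction k arbitrary: a')
  case 0
  then show ?case by auto
next
  case (Suc k)
  from Suc.prems obtain m where m: "(unsigned Q ^^ k) a m" "unsigned Q m a'"
    by (rule relpowp_Suc_E)
  from m(2) obtain s where "Q m a' s"
    unfolding unsigned_def by blast
  then have step: "double_cover Q (m, b = g) (a', b = (g = s))" for b g
    by (cases b; cases g; cases s) (simp_all add: double_cover_def)
  obtain g where "\<And>b. (double_cover Q ^^ k) (a, b) (m, b = g)"
    using Suc.IH[OF m(1)] by blast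
  then have "(double_cover Q ^^ Suc k) (a, b) (a', b = (g = s))" for b
    using step by (rule relpowp_Suc_I)
  then show ?case by blast
qed

lemma primitive_double_cover_if_both_sheets:
  assumes "primitive_rel (unsigned Q)"
    and "(double_cover Q ^^ n) x (a, True)" "(double_cover Q ^^ n) x (a, False)"
  shows "primitive_rel (double_cover Q)"
proof -
  obtain K where K: "1 \<le> K" "\<And>a a'. (unsigned Q ^^ K) a a'"
    using assms(1) unfolding primitive_rel_def by blast
  obtain ax bx where x: "x = (ax, bx)" by fastforce
  have same_sheet: "(double_cover Q ^^ n) (ax, bx) (a, d)" for d
    using assms(2,3) unfolding x by (cases d) auto
  have from_x: "(double_cover Q ^^ n) (ax, c) (a, d)" for c d
  proof (cases "c = bx")
    case True
    then show ?thesis using same_sheet by simp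
  next
    case False
    then show ?thesis using double_cover_relpowp_flip[OF same_sheet[of "\<not> d"]] by simp
  qed
  have "(double_cover Q ^^ (K + n + K)) y z" for y z
  proof -
    obtain a1 b1 a2 b2 where yz: "y = (a1, b1)" "z = (a2, b2)" by fastforce
    obtain g where "(double_cover Q ^^ K) (a1, b1) (ax, b1 = g)"
      using double_cover_relpowp_lift[OF K(2)] by blast
    moreover obtain g' where g': "\<And>b. (double_cover Q ^^ K) (a, b) (a2, b = g')"
      using double_cover_relpowp_lift[OF K(2)] by blast
    have "(double_cover Q ^^ K) (a, b2 = g') (a2, b2)"
      using g'[of "b2 = g'"] by (cases b2; cases g') simp_all
    ultimately show ?thesis
      unfolding yz using from_x by (blast intro: relpowp_trans)
  qed
  then show ?thesis
    unfolding primitive_rel_def using K(1) by (intro exI[of _ "K + n + K"]) auto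
qed

lemma balanced_or_antibalanced_if_sheets_unique:
  assumes "primitive_rel (unsigned Q)"
    and unique: "\<And>n x a c c'. (double_cover Q ^^ n) x (a, c) \<Longrightarrow> (double_cover Q ^^ n) x (a, c') \<Longrightarrow> c = c'"
  shows "balanced_or_antibalanced Q"
proof -
  obtain K where K: "\<And>a a'. (unsigned Q ^^ K) a a'"
    using assms(1) unfolding primitive_rel_def by blast
  fix a0 :: 'a \<comment> \<open>base point: sheets are compared through walks ending at a0\<close>
  define x0 where "x0 = (a0, True)"
  have "\<forall>a. \<exists>g. \<forall>c. (double_cover Q ^^ K) (a, c) (a0, c = g)"
    using double_cover_relpowp_lift[OF K] by blast
  from choice[OF this] obtain g where g: "\<And>a c. (double_cover Q ^^ K) (a, c) (a0, c = g a)"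
    by blast
  define ori where "ori a \<longleftrightarrow> (double_cover Q ^^ K) x0 (a, True)" for a
  have ori: "(double_cover Q ^^ K) x0 (a, ori a)" for a
  proof -
    obtain c where c: "(double_cover Q ^^ K) x0 (a, c)"
      using double_cover_relpowp_lift[OF K] unfolding x0_def by blast
    then have "ori a = c"
      using unique[of K x0 a True c] by (cases c) (auto simp: ori_def)
    then show ?thesis using c by simp
  qed
  have parity: "(c = g a) = (c' = g a')"
    if "(double_cover Q ^^ n) x0 (a, c)" "(double_cover Q ^^ n) x0 (a', c')" for n a c a' c'
    using unique[OF relpowp_trans[OF that(1) g] relpowp_trans[OF that(2) g]] .
  have step: "(double_cover Q ^^ Suc K) x0 (a', ori a = s)" if "Q a a' s" for a a' s
    using ori[of a] by (rule relpowp_Suc_I) (cases "ori a"; simp add: double_cover_def that)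
  have xor_cancel: "((x1::bool) = y1) = ((x2::bool) = y2)"
    if "(x1 = (g1::bool)) = (x2 = (g2::bool))" "((y1::bool) = g1) = ((y2::bool) = g2)" for x1 x2 y1 y2 g1 g2
    using that by argo
  have same_twist: "((ori a1 = s1) = ori a1') = ((ori a2 = s2) = ori a2')"
    if "Q a1 a1' s1" "Q a2 a2' s2" for a1 a1' s1 a2 a2' s2
    using xor_cancel[OF parity[OF step[OF that(1)] step[OF that(2)]] parity[OF ori ori]] .
  obtain a1 s1 where e1: "Q a0 a1 s1"
    using primitive_rel_left_total[OF assms(1)] unfolding left_total_def unsigned_def by blast
  define t where "t = ((ori a0 = s1) = ori a1)"
  have sign: "s = ((ori a = ori a') = t)" if "Q a a' s" for a a' s
    using same_twist[OF that e1] unfolding t_def by argo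
  show ?thesis
    unfolding balanced_or_antibalanced_def by (intro exI allI impI) (fact sign)
qed

lemma not_primitive_double_cover_if_balanced:
  assumes "balanced_or_antibalanced Q"
  shows "\<not> primitive_rel (double_cover Q)"
proof
  obtain ori :: "'a \<Rightarrow> bool" and t where ori: "\<And>a a' s. Q a a' s \<Longrightarrow> s = ((ori a = ori a') = t)"
    using assms unfolding balanced_or_antibalanced_def by blast
  define on_sheet where "on_sheet x \<longleftrightarrow> snd x = ori (fst x)" for x
  have invariant: "(on_sheet x = on_sheet y) = (t \<or> even k)" if "(double_cover Q ^^ k) x y" for k x y
    using that
  proof (induction k arbitrary: y)
    case 0
    then show ?case by simp
  next
    case (Suc k)
    from Suc.prems obtain z where z: "(double_cover Q ^^ k) x z" "double_cover Q z y"
      by (rule relpowp_Suc_E)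
    have "(on_sheet x = on_sheet z) = (t \<or> even k)"
      using Suc.IH[OF z(1)] .
    moreover have "(on_sheet z = on_sheet y) = t"
      using z(2) ori[of "fst z" "fst y"] by (cases t) (auto simp: double_cover_def on_sheet_def)
    ultimately show ?case
      by (cases t) auto
  qed
  assume "primitive_rel (double_cover Q)"
  then obtain k where "\<And>x y. (double_cover Q ^^ k) x y"
    unfolding primitive_rel_def by blast
  fix a :: 'a
  show False
    using invariant[of k "(a, True)" "(a, True)"] invariant[of k "(a, True)" "(a, False)"]
      \<open>\<And>x y. (double_cover Q ^^ k) x y\<close> by (simp add: on_sheet_def)
qed

theorem primitive_double_cover_iff:
  assumes "primitive_rel (unsigned Q)"
  shows "primitive_rel (double_cover Q) \<longleftrightarrow> \<not> balanced_or_antibalanced Q"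
proof
  show "primitive_rel (double_cover Q) \<Longrightarrow> \<not> balanced_or_antibalanced Q"
    using not_primitive_double_cover_if_balanced by blast
next
  assume "\<not> balanced_or_antibalanced Q"
  then obtain n x a c c' where
    "(double_cover Q ^^ n) x (a, c)" "(double_cover Q ^^ n) x (a, c')" "c \<noteq> c'"
    using balanced_or_antibalanced_if_sheets_unique[OF assms] by blast
  then have "(double_cover Q ^^ n) x (a, True)" "(double_cover Q ^^ n) x (a, False)"
    by (cases c; simp)+
  then show "primitive_rel (double_cover Q)"
    by (rule primitive_double_cover_if_both_sheets[OF assms])
qed

section \<open>The orientation lift\<close>

definition signed_crossings :: "('e \<Rightarrow> 'e dedge list) \<Rightarrow> 'e \<Rightarrow> 'e \<Rightarrow> bool \<Rightarrow> bool" where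
  "signed_crossings fe i l s \<longleftrightarrow> (i, s) \<in> set (fe l)"

lemma count_list_rev_path: "count_list (rev_path p) (e, b) = count_list p (e, \<not> b)"
  by (induction p) (auto simp: rev_path_def)

lemma count_list_map_dedge:
  "count_list (map_dedge fe (l, b)) (i, c) = count_list (fe l) (i, c = b)"
  by (cases b) (simp_all add: map_dedge_def count_list_rev_path)

lemma mem_map_dedge: "(i, c) \<in> set (map_dedge fe (l, b)) \<longleftrightarrow> (i, c = b) \<in> set (fe l)"
  by (metis count_list_0_iff count_list_map_dedge)

lemma length_filter_fst_eq:
  "length (filter (\<lambda>d. fst d = e) p) = count_list p (e, True) + count_list p (e, False)"
  by (induction p) auto

lemma length_filter_fst_pos_lift:
  "length (filter (\<lambda>x. fst x = d) (pos_lift p)) = count_list p d"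
  by (induction p) (auto simp: pos_lift_def)

lemma transition_matrix_orient_lift:
  "transition_matrix (orient_lift fe) $ (i, c) $ (l, b) = real (count_list (fe l) (i, c = b))"
  by (simp add: transition_matrix_def orient_lift_def length_filter_fst_pos_lift count_list_map_dedge)

lemma sum_sheets_transition_matrix_orient_lift:
  "(\<Sum>c\<in>UNIV. transition_matrix (orient_lift fe) $ (i, c) $ (l, b)) = transition_matrix fe $ i $ l"
  by (cases b) (simp_all add: UNIV_bool transition_matrix_orient_lift transition_matrix_def[of fe]
      length_filter_fst_eq)

lemma pos_entries_transition_matrix:
  "pos_entries (transition_matrix fe) = unsigned (signed_crossings fe)"
proof (intro ext)
  fix i l
  have "0 < length (filter (\<lambda>d. fst d = i) (fe l)) \<longleftrightarrow> (\<exists>d\<in>set (fe l). fst d = i)"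
    by (auto simp: filter_empty_conv)
  then show "pos_entries (transition_matrix fe) i l = unsigned (signed_crossings fe) i l"
    by (force simp: pos_entries_def transition_matrix_def unsigned_def signed_crossings_def)
qed

lemma pos_entries_transition_matrix_orient_lift:
  "pos_entries (transition_matrix (orient_lift fe)) = double_cover (signed_crossings fe)"
proof (intro ext)
  fix d d'
  show "pos_entries (transition_matrix (orient_lift fe)) d d' = double_cover (signed_crossings fe) d d'"
    using count_list_0_iff[of "fe (fst d')" "(fst d, snd d = snd d')"]
    by (cases d; cases d') (auto simp: pos_entries_def transition_matrix_orient_lift double_cover_def
        signed_crossings_def)
qed

lemma spectral_radius_transition_matrix_orient_lift:
  fixes fe :: "'e::finite \<Rightarrow> 'e dedge list"
  assumes "primitive (transition_matrix fe)"
  shows "spectral_radius (transition_matrix (orient_lift fe)) = spectral_radius (transition_matrix fe)"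
proof -
  obtain w r where w_pos: "\<And>i. 0 < w$i" and w: "w v* transition_matrix fe = r *s w"
    using primitive_pos_left_eigenvector[OF assms] by blast
  define w' :: "real^('e dedge)" where "w' = (\<chi> d. w $ fst d)"
  have "(w' v* transition_matrix (orient_lift fe)) $ (l, b) = (r *s w') $ (l, b)" for l b
  proof -
    have "(w' v* transition_matrix (orient_lift fe)) $ (l, b)
        = (\<Sum>d\<in>UNIV. w $ fst d * transition_matrix (orient_lift fe) $ d $ (l, b))"
      by (simp add: vector_matrix_mult_def w'_def)
    also have "\<dots> = (\<Sum>i\<in>UNIV. w$i * (\<Sum>c\<in>UNIV. transition_matrix (orient_lift fe) $ (i, c) $ (l, b)))"
      by (subst sum_UNIV_prod) (simp add: sum_distrib_left)
    also have "\<dots> = (w v* transition_matrix fe) $ l"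
      by (simp add: sum_sheets_transition_matrix_orient_lift vector_matrix_mult_def)
    finally show ?thesis
      by (simp add: w w'_def)
  qed
  then have "w' v* transition_matrix (orient_lift fe) = r *s w'"
    by (simp add: vec_eq_iff)
  then have "spectral_radius (transition_matrix (orient_lift fe)) = r"
    by (intro spectral_radius_eq_pos_left_eigenvector) (auto simp: w'_def w_pos transition_matrix_def)
  moreover have "spectral_radius (transition_matrix fe) = r"
    by (intro spectral_radius_eq_pos_left_eigenvector[OF _ w_pos w]) (simp add: transition_matrix_def)
  ultimately show ?thesis by simp
qed

lemma orientation_condition_iff:
  "(\<forall>l. \<forall>d\<in>set (map_dedge fe (l, ori l)). (snd d = ori (fst d)) = t) \<longleftrightarrow>
   (\<forall>i l s. signed_crossings fe i l s \<longrightarrow> s = ((ori i = ori l) = t))"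
proof
  assume orient: "\<forall>l. \<forall>d\<in>set (map_dedge fe (l, ori l)). (snd d = ori (fst d)) = t"
  show "\<forall>i l s. signed_crossings fe i l s \<longrightarrow> s = ((ori i = ori l) = t)"
  proof (intro allI impI)
    fix i l s
    assume "signed_crossings fe i l s"
    then have "(i, s = ori l) \<in> set (map_dedge fe (l, ori l))"
      by (cases s; cases "ori l") (simp_all add: mem_map_dedge signed_crossings_def)
    then have "((s = ori l) = ori i) = t"
      using orient by fastforce
    then show "s = ((ori i = ori l) = t)"
      by argo
  qed
next
  assume sign: "\<forall>i l s. signed_crossings fe i l s \<longrightarrow> s = ((ori i = ori l) = t)"
  show "\<forall>l. \<forall>d\<in>set (map_dedge fe (l, ori l)). (snd d = ori (fst d)) = t"
  proof (intro allI ballI)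
    fix l d
    assume d: "d \<in> set (map_dedge fe (l, ori l))"
    obtain i c where dd: "d = (i, c)" by fastforce
    have "signed_crossings fe i l (c = ori l)"
      using d unfolding dd by (simp add: mem_map_dedge signed_crossings_def)
    then have "(c = ori l) = ((ori i = ori l) = t)"
      using sign by blast
    then show "(snd d = ori (fst d)) = t"
      unfolding dd fst_conv snd_conv by argo
  qed
qed

lemma orientable_iff_balanced_or_antibalanced:
  fixes fe :: "'e \<Rightarrow> 'e dedge list"
  shows "orientable fe \<longleftrightarrow> balanced_or_antibalanced (signed_crossings fe)"
proof -
  have "orientable fe \<longleftrightarrow> (\<exists>t ori. \<forall>l. \<forall>d\<in>set (map_dedge fe (l, ori l)). (snd d = ori (fst d)) = t)"
    unfolding orientable_def positively_orientable_def negatively_orientable_def ex_bool_eq by auto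
  also have "\<dots> \<longleftrightarrow> (\<exists>t (ori :: 'e \<Rightarrow> bool). \<forall>i l s. signed_crossings fe i l s \<longrightarrow> s = ((ori i = ori l) = t))"
    by (simp only: orientation_condition_iff)
  also have "\<dots> \<longleftrightarrow> balanced_or_antibalanced (signed_crossings fe)"
    unfolding balanced_or_antibalanced_def by blast
  finally show ?thesis .
qed

theorem lemma2p4:
  fixes src tgt :: "'e::finite \<Rightarrow> 'v::finite"
    and fv :: "'v \<Rightarrow> 'v" and fe :: "'e \<Rightarrow> 'e dedge list"
  assumes "graph_map src tgt fv fe"
    and "primitive (transition_matrix fe)"
  shows "spectral_radius (transition_matrix (orient_lift fe)) = spectral_radius (transition_matrix fe)
         \<and> (primitive (transition_matrix (orient_lift fe)) \<longleftrightarrow> \<not> orientable fe)"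
proof
  \<comment> \<open>Only the edge images matter.\<close>
  show "spectral_radius (transition_matrix (orient_lift fe)) = spectral_radius (transition_matrix fe)"
    using spectral_radius_transition_matrix_orient_lift[OF assms(2)] .
  have "primitive_rel (unsigned (signed_crossings fe))"
    using assms(2) by (simp add: primitive_iff_primitive_rel pos_entries_transition_matrix)
  moreover have "\<forall>i j. 0 \<le> transition_matrix (orient_lift fe) $ i $ j"
    by (simp add: transition_matrix_def)
  ultimately show "primitive (transition_matrix (orient_lift fe)) \<longleftrightarrow> \<not> orientable fe"
    by (simp add: primitive_iff_primitive_rel pos_entries_transition_matrix_orient_lift
        primitive_double_cover_iff orientable_iff_balanced_or_antibalanced)
qed

end
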